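(* Consider $N$ double-integrator agents $$\dot x_i=v_i,\qquad \dot v_i=\sum_{j=1}^N\alpha_{ij}\big((x_j-x_i)+(y_j-y_i)\big),\qquad y_i=\mathrm{sat}(v_i),\qquad i\in\{1,\dots,N\},$$ where the constant weights $\alpha_{ij}=\alpha_{ji}\ge0$ define an undirected connected graph and $\mathrm{sat}(v)=\mathrm{sign}(v)\min\{|v|,s\}$ with a common level $s>0$. Assume the agents are not in consensus at $t_0$ (i.e. it is not the case that all $x_i(t_0)$ are equal and all $v_i(t_0)$ are equal). Then $\lim_{t\to\infty}(x_i(t)-x_j(t))=0$ and $\lim_{t\to\infty}(v_i(t)-v_j(t))=0$ for all $i,j$ if and only if $$\frac1N\Big|\sum_{i=1}^N v_i(t_0)\Big|\le s.$$
   Context: The graph is connected if any two nodes are joined by a path of edges $\{i,j\}$ with $\alpha_{ij}>0$. *)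

theory Defs
  imports "HOL-Analysis.Analysis"
begin

definition sat :: "real \<Rightarrow> real \<Rightarrow> real" where
  "sat s w = sgn w * min \<bar>w\<bar> s"

definition graph_connected :: "('n \<Rightarrow> 'n \<Rightarrow> real) \<Rightarrow> bool" where
  "graph_connected \<alpha> \<longleftrightarrow> (\<forall>i j. (\<lambda>a b. \<alpha> a b > 0)\<^sup>*\<^sup>* i j)"

end

theory Submission
  imports Defs
begin

text \<open>
  The energy
    \<open>W = 1/2 \<Sum>\<^sub>i (v\<^sub>i - m)\<^sup>2 + 1/4 \<Sum>\<^sub>i\<^sub>j \<alpha>\<^sub>i\<^sub>j (x\<^sub>i - x\<^sub>j)\<^sup>2\<close>,
  where \<open>m\<close> is the mean velocity (conserved, since the coupling is symmetric), decreases at the rate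
    \<open>\<phi> = 1/2 \<Sum>\<^sub>i\<^sub>j \<alpha>\<^sub>i\<^sub>j (v\<^sub>i - v\<^sub>j) (sat v\<^sub>i - sat v\<^sub>j) \<ge> 0\<close>.
  All signals are bounded and Lipschitz, so Barbalat's lemma gives \<open>\<phi> \<longrightarrow> 0\<close>: the saturated
  velocities synchronise along every edge and hence, by connectivity, globally.

  If \<open>|m| \<le> s\<close>, velocities whose saturations nearly agree and whose mean is \<open>m\<close> nearly agree
  themselves. Then every \<open>v\<^sub>i \<longrightarrow> m\<close>, Barbalat's lemma applied to \<open>v\<^sub>i\<close> gives \<open>v\<^sub>i' \<longrightarrow> 0\<close>, so the
  graph Laplacian of the positions tends to 0, and with it the position differences.

  If \<open>|m| > s\<close> and consensus is reached, eventually all velocities saturate on the same side, so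
  \<open>\<phi> = 0\<close> and \<open>W\<close> is eventually constant; as \<open>W \<longrightarrow> 0\<close>, it vanishes in finite time. That is
  impossible when the agents start out of consensus, because \<open>\<phi> \<le> C W\<close> forces
  \<open>W t \<ge> W t\<^sub>0 exp (- C (t - t\<^sub>0)) > 0\<close>.
\<close>

section \<open>Calculus on a half-line\<close>

lemma mvt_atLeast:
  fixes f f' :: "real \<Rightarrow> real"
  assumes deriv: "\<And>t. t \<ge> t0 \<Longrightarrow> (f has_real_derivative f' t) (at t within {t0..})"
    and "t0 \<le> a" "a < b"
  obtains z where "a < z" "z < b" "f b - f a = (b - a) * f' z"
proof -
  have "(f has_derivative (\<lambda>h. f' t * h)) (at t within {a..b})" if "a \<le> t" "t \<le> b" for t
  proof -
    have "(f has_real_derivative f' t) (at t within {a..b})"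
      by (rule DERIV_subset[OF deriv]) (use that \<open>t0 \<le> a\<close> in auto)
    then show ?thesis by (simp add: has_field_derivative_def)
  qed
  from mvt_simple[OF \<open>a < b\<close> this] obtain z where "z \<in> {a<..<b}" "f b - f a = f' z * (b - a)"
    by blast
  with that[of z] show ?thesis by (simp add: mult.commute)
qed

lemma deriv_nonneg_imp_mono_atLeast:
  fixes f f' :: "real \<Rightarrow> real"
  assumes "\<And>t. t \<ge> t0 \<Longrightarrow> (f has_real_derivative f' t) (at t within {t0..})"
    and "\<And>t. t \<ge> t0 \<Longrightarrow> f' t \<ge> 0" and "t0 \<le> a" "a \<le> b"
  shows "f a \<le> f b"
proof (cases "a = b")
  case False
  with \<open>a \<le> b\<close> obtain z where "a < z" "f b - f a = (b - a) * f' z"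
    using mvt_atLeast[OF assms(1) \<open>t0 \<le> a\<close>] by (metis order_less_le)
  with assms(2-4) show ?thesis by (smt (verit) mult_nonneg_nonneg)
qed simp

lemma bounded_derivative_imp_lipschitz_atLeast:
  fixes f f' :: "real \<Rightarrow> real"
  assumes "\<And>t. t \<ge> t0 \<Longrightarrow> (f has_real_derivative f' t) (at t within {t0..})"
    and "\<And>t. t \<ge> t0 \<Longrightarrow> \<bar>f' t\<bar> \<le> C" and "0 \<le> C"
  shows "C-lipschitz_on {t0..} f"
proof (rule lipschitz_onI)
  show "dist (f a) (f b) \<le> C * dist a b" if "a \<in> {t0..}" "b \<in> {t0..}" for a b
    using field_differentiable_bound[of "{t0..}" f f' C a b] assms(1,2) that
    by (simp add: dist_real_def)
qed fact

lemma tendsto_Inf_if_antimono_atLeast: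
  fixes f :: "real \<Rightarrow> real"
  assumes antimono: "\<And>a b. t0 \<le> a \<Longrightarrow> a \<le> b \<Longrightarrow> f b \<le> f a"
    and below: "\<And>t. t0 \<le> t \<Longrightarrow> B \<le> f t"
  shows "(f \<longlongrightarrow> Inf (f ` {t0..})) at_top"
proof (rule decreasing_tendsto)
  have bdd: "bdd_below (f ` {t0..})"
    using below by (intro bdd_belowI[of _ B]) auto
  then show "eventually (\<lambda>t. Inf (f ` {t0..}) \<le> f t) at_top"
    unfolding eventually_at_top_linorder by (auto intro: cInf_lower)
  fix y assume "Inf (f ` {t0..}) < y"
  then obtain t1 where "t1 \<ge> t0" "f t1 < y"
    using cInf_lessD[of "f ` {t0..}"] by auto
  then have "f t < y" if "t \<ge> t1" for t
    using antimono[of t1 t] that by simp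
  then show "eventually (\<lambda>t. f t < y) at_top"
    unfolding eventually_at_top_linorder by blast
qed

lemma eventually_eq_lim_if_derivative_eventually_0:
  fixes f f' :: "real \<Rightarrow> real"
  assumes deriv: "\<And>t. t \<ge> t0 \<Longrightarrow> (f has_real_derivative f' t) (at t within {t0..})"
    and "eventually (\<lambda>t. f' t = 0) at_top" and lim: "(f \<longlongrightarrow> L) at_top"
  shows "eventually (\<lambda>t. f t = L) at_top"
proof -
  obtain T where "T \<ge> t0" and T: "\<And>t. t \<ge> T \<Longrightarrow> f' t = 0"
    using assms(2) unfolding eventually_at_top_linorder
    by (metis (full_types) max.cobounded1 max.cobounded2 order_trans)
  have const: "f t = f T" if "t \<ge> T" for t
  proof (cases "t = T")
    case False
    with that obtain z where "T < z" "f t - f T = (t - T) * f' z"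
      using mvt_atLeast[OF deriv \<open>T \<ge> t0\<close>, of t] by (metis order_less_le)
    then show ?thesis using T[of z] by simp
  qed simp
  then have "eventually (\<lambda>t. f t = f T) at_top"
    unfolding eventually_at_top_linorder by blast
  then have "(f \<longlongrightarrow> f T) at_top"
    by (rule tendsto_eventually)
  with lim have "L = f T"
    by (rule tendsto_unique[OF trivial_limit_at_top_linorder])
  with const show ?thesis
    unfolding eventually_at_top_linorder by metis
qed

lemma pos_if_derivative_ge_linear:
  fixes f f' :: "real \<Rightarrow> real"
  assumes deriv: "\<And>t. t \<ge> t0 \<Longrightarrow> (f has_real_derivative f' t) (at t within {t0..})"
    and ge: "\<And>t. t \<ge> t0 \<Longrightarrow> - C * f t \<le> f' t"
    and "f t0 > 0" "t0 \<le> t"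
  shows "f t > 0"
proof -
  define g where "g t = exp (C * (t - t0)) * f t" for t
  have "((\<lambda>t. exp (C * (t - t0)) * f t) has_real_derivative
      exp (C * (t - t0)) * (C * f t + f' t)) (at t within {t0..})" if "t \<ge> t0" for t
  proof -
    have "((\<lambda>t. exp (C * (t - t0))) has_real_derivative exp (C * (t - t0)) * C) (at t within {t0..})"
      by (auto intro!: derivative_eq_intros)
    from DERIV_mult[OF this deriv[OF that]] show ?thesis
      by (simp add: algebra_simps)
  qed
  moreover have "exp (C * (t - t0)) * (C * f t + f' t) \<ge> 0" if "t \<ge> t0" for t
    using ge[OF that] by simp
  ultimately have "g t0 \<le> g t"
    unfolding g_def by (rule deriv_nonneg_imp_mono_atLeast) (use \<open>t0 \<le> t\<close> in auto)
  with \<open>f t0 > 0\<close> have "0 < exp (C * (t - t0)) * f t"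
    unfolding g_def by simp
  then show ?thesis by (simp add: zero_less_mult_iff)
qed

lemma barbalat:
  fixes f f' :: "real \<Rightarrow> real"
  assumes deriv: "\<And>t. t \<ge> t0 \<Longrightarrow> (f has_real_derivative f' t) (at t within {t0..})"
    and lim: "(f \<longlongrightarrow> L) at_top"
    and unif: "uniformly_continuous_on {t0..} f'"
  shows "(f' \<longlongrightarrow> 0) at_top"
proof (rule tendstoI)
  fix e :: real assume "e > 0"
  then obtain d where "d > 0"
    and d: "\<And>a b. a \<in> {t0..} \<Longrightarrow> b \<in> {t0..} \<Longrightarrow> dist a b < d \<Longrightarrow> dist (f' a) (f' b) < e / 2"
    using unif half_gt_zero unfolding uniformly_continuous_on_def by metis
  have "eventually (\<lambda>t. dist (f t) L < d * e / 8) at_top"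
    using tendstoD[OF lim, of "d * e / 8"] \<open>d > 0\<close> \<open>e > 0\<close> by simp
  then obtain T where T: "\<And>t. t \<ge> T \<Longrightarrow> \<bar>f t - L\<bar> < d * e / 8"
    unfolding eventually_at_top_linorder dist_real_def by blast
  have "\<bar>f' t\<bar> < e" if t: "t \<ge> max T t0" for t
  proof -
    obtain z where z: "t < z" "z < t + d / 2" "f (t + d / 2) - f t = d / 2 * f' z"
      using mvt_atLeast[OF deriv, of t "t + d / 2"] t \<open>d > 0\<close> by auto
    have "\<bar>f t - L\<bar> < d * e / 8" "\<bar>f (t + d / 2) - L\<bar> < d * e / 8"
      using T t \<open>d > 0\<close> by auto
    then have "\<bar>f (t + d / 2) - f t\<bar> < d * e / 4"
      by linarith
    then have "d / 2 * \<bar>f' z\<bar> < d / 2 * (e / 2)" using z \<open>d > 0\<close> by (simp add: abs_mult)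
    then have "\<bar>f' z\<bar> < e / 2" using \<open>d > 0\<close> by simp
    moreover have "\<bar>f' z - f' t\<bar> < e / 2" using d[of z t] z t \<open>d > 0\<close> by (simp add: dist_real_def)
    ultimately show ?thesis by linarith
  qed
  then show "eventually (\<lambda>t. dist (f' t) 0 < e) at_top"
    unfolding eventually_at_top_linorder by (auto intro: exI[of _ "max T t0"])
qed

lemma tendsto_0_if_weighted_square_le:
  fixes h g :: "'a \<Rightarrow> real"
  assumes "c > 0" and le: "eventually (\<lambda>t. c * (h t)\<^sup>2 \<le> g t) F" and "(g \<longlongrightarrow> 0) F"
  shows "(h \<longlongrightarrow> 0) F"
proof -
  have lim: "((\<lambda>t. g t / c) \<longlongrightarrow> 0) F"
    using tendsto_divide[OF \<open>(g \<longlongrightarrow> 0) F\<close> tendsto_const, of c] \<open>c > 0\<close> by simp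
  have "eventually (\<lambda>t. (h t)\<^sup>2 \<le> g t / c) F"
    using le by eventually_elim (use \<open>c > 0\<close> in \<open>simp add: pos_le_divide_eq mult.commute\<close>)
  then have "((\<lambda>t. (h t)\<^sup>2) \<longlongrightarrow> 0) F"
    by (intro tendsto_sandwich[OF _ _ tendsto_const lim]) auto
  then have "((\<lambda>t. \<bar>h t\<bar>) \<longlongrightarrow> 0) F"
    using tendsto_real_sqrt by fastforce
  then show ?thesis
    by (rule tendsto_rabs_zero_cancel)
qed

lemma tendsto_0_if_bounded_mult:
  fixes f g :: "real \<Rightarrow> real"
  assumes "bounded (f ` {t0..})" and "(g \<longlongrightarrow> 0) at_top"
  shows "((\<lambda>t. f t * g t) \<longlongrightarrow> 0) at_top"
proof -
  obtain B where "\<And>t. t \<ge> t0 \<Longrightarrow> \<bar>f t\<bar> \<le> B"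
    using assms(1) unfolding bounded_real by auto
  then have "Bfun f at_top"
    by (intro BfunI[of _ B] eventually_at_top_linorderI[of t0]) simp
  with assms(2) show ?thesis
    unfolding tendsto_Zfun_iff
    using bounded_bilinear.Bfun_prod_Zfun[OF bounded_bilinear_mult] by simp
qed

section \<open>Bounded Lipschitz functions\<close>

lemma bounded_mult_comp:
  fixes f g :: "'a \<Rightarrow> real"
  assumes "bounded (f ` U)" "bounded (g ` U)"
  shows "bounded ((\<lambda>x. f x * g x) ` U)"
proof -
  obtain B B' where "\<And>x. x \<in> U \<Longrightarrow> \<bar>f x\<bar> \<le> B" "\<And>x. x \<in> U \<Longrightarrow> \<bar>g x\<bar> \<le> B'"
    using assms unfolding bounded_real by auto
  then have "\<bar>f x * g x\<bar> \<le> B * B'" if "x \<in> U" for x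
    using that by (simp add: abs_mult mult_mono')
  then show ?thesis
    unfolding bounded_real by blast
qed

lemma bounded_sum_comp:
  fixes f :: "'i \<Rightarrow> 'a \<Rightarrow> real"
  shows "(\<And>i. i \<in> I \<Longrightarrow> bounded (f i ` U)) \<Longrightarrow> bounded ((\<lambda>x. \<Sum>i\<in>I. f i x) ` U)"
proof (induction I rule: infinite_finite_induct)
  case (insert i I)
  then show ?case
    by (simp add: bounded_plus_comp)
qed (auto simp: bounded_real)

definition bounded_lipschitz_on :: "'a::metric_space set \<Rightarrow> ('a \<Rightarrow> real) \<Rightarrow> bool" where
  "bounded_lipschitz_on U f \<longleftrightarrow> bounded (f ` U) \<and> (\<exists>C. C-lipschitz_on U f)"

lemma bounded_lipschitz_onI:
  "bounded (f ` U) \<Longrightarrow> C-lipschitz_on U f \<Longrightarrow> bounded_lipschitz_on U f"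
  unfolding bounded_lipschitz_on_def by blast

lemma bounded_lipschitz_on_imp_uniformly_continuous_on:
  "bounded_lipschitz_on U f \<Longrightarrow> uniformly_continuous_on U f"
  unfolding bounded_lipschitz_on_def by (metis lipschitz_on_uniformly_continuous)

lemma bounded_lipschitz_on_const: "bounded_lipschitz_on U (\<lambda>x. c)"
  by (rule bounded_lipschitz_onI[OF _ lipschitz_on_constant]) (auto simp: bounded_real)

lemma bounded_lipschitz_on_add:
  "bounded_lipschitz_on U f \<Longrightarrow> bounded_lipschitz_on U g \<Longrightarrow> bounded_lipschitz_on U (\<lambda>x. f x + g x)"
  unfolding bounded_lipschitz_on_def by (metis bounded_plus_comp lipschitz_on_add)

lemma bounded_lipschitz_on_diff:
  "bounded_lipschitz_on U f \<Longrightarrow> bounded_lipschitz_on U g \<Longrightarrow> bounded_lipschitz_on U (\<lambda>x. f x - g x)"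
  unfolding bounded_lipschitz_on_def by (metis bounded_minus_comp lipschitz_on_diff)

lemma bounded_lipschitz_on_sum:
  "(\<And>i. i \<in> I \<Longrightarrow> bounded_lipschitz_on U (f i)) \<Longrightarrow> bounded_lipschitz_on U (\<lambda>x. \<Sum>i\<in>I. f i x)"
  by (induction I rule: infinite_finite_induct)
    (simp_all add: bounded_lipschitz_on_const bounded_lipschitz_on_add)

lemma bounded_lipschitz_on_mult:
  assumes "bounded_lipschitz_on U f" "bounded_lipschitz_on U g"
  shows "bounded_lipschitz_on U (\<lambda>x. f x * g x)"
proof -
  obtain B K where "B > 0" and B: "\<And>x. x \<in> U \<Longrightarrow> \<bar>f x\<bar> \<le> B" and K: "K-lipschitz_on U f"
    using assms(1) unfolding bounded_lipschitz_on_def bounded_pos by auto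
  obtain B' K' where "B' > 0" and B': "\<And>x. x \<in> U \<Longrightarrow> \<bar>g x\<bar> \<le> B'" and K': "K'-lipschitz_on U g"
    using assms(2) unfolding bounded_lipschitz_on_def bounded_pos by auto
  have "bounded ((\<lambda>x. f x * g x) ` U)"
    using assms unfolding bounded_lipschitz_on_def by (blast intro: bounded_mult_comp)
  moreover have "(B * K' + B' * K)-lipschitz_on U (\<lambda>x. f x * g x)"
  proof (rule lipschitz_onI)
    fix x y assume "x \<in> U" "y \<in> U"
    have "\<bar>f x * g x - f y * g y\<bar> = \<bar>f x * (g x - g y) + g y * (f x - f y)\<bar>"
      by (simp add: algebra_simps)
    also have "\<dots> \<le> \<bar>f x\<bar> * \<bar>g x - g y\<bar> + \<bar>g y\<bar> * \<bar>f x - f y\<bar>"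
      by (simp add: abs_mult[symmetric] abs_triangle_ineq)
    also have "\<dots> \<le> B * (K' * dist x y) + B' * (K * dist x y)"
      using lipschitz_onD[OF K \<open>x \<in> U\<close> \<open>y \<in> U\<close>] lipschitz_onD[OF K' \<open>x \<in> U\<close> \<open>y \<in> U\<close>]
        B[OF \<open>x \<in> U\<close>] B'[OF \<open>y \<in> U\<close>]
      by (intro add_mono mult_mono) (auto simp: dist_real_def)
    finally show "dist (f x * g x) (f y * g y) \<le> (B * K' + B' * K) * dist x y"
      by (simp add: dist_real_def algebra_simps)
  next
    show "0 \<le> B * K' + B' * K"
      using \<open>B > 0\<close> \<open>B' > 0\<close> lipschitz_on_nonneg[OF K] lipschitz_on_nonneg[OF K'] by simp
  qed
  ultimately show ?thesis
    by (rule bounded_lipschitz_onI)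
qed

lemma bounded_lipschitz_on_compose:
  assumes "C-lipschitz_on UNIV g" "bounded_lipschitz_on U f"
  shows "bounded_lipschitz_on U (\<lambda>x. g (f x))"
proof -
  obtain B K where B: "\<And>x. x \<in> U \<Longrightarrow> \<bar>f x\<bar> \<le> B" and K: "K-lipschitz_on U f"
    using assms(2) unfolding bounded_lipschitz_on_def bounded_real by auto
  have "\<bar>g (f x)\<bar> \<le> \<bar>g 0\<bar> + C * B" if "x \<in> U" for x
  proof -
    have "\<bar>g (f x) - g 0\<bar> \<le> C * \<bar>f x\<bar>"
      using lipschitz_onD[OF assms(1), of "f x" 0] by (simp add: dist_real_def)
    also have "\<dots> \<le> C * B"
      using B[OF that] lipschitz_on_nonneg[OF assms(1)] by (rule mult_left_mono)
    finally show ?thesis by linarith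
  qed
  then have "bounded ((\<lambda>x. g (f x)) ` U)"
    unfolding bounded_real by blast
  moreover have "(C * K)-lipschitz_on U (\<lambda>x. g (f x))"
    using lipschitz_on_compose2[OF K lipschitz_on_subset[OF assms(1)]] by simp
  ultimately show ?thesis
    by (rule bounded_lipschitz_onI)
qed

lemma bounded_derivative_imp_bounded_lipschitz_on:
  fixes f f' :: "real \<Rightarrow> real"
  assumes "\<And>t. t \<ge> t0 \<Longrightarrow> (f has_real_derivative f' t) (at t within {t0..})"
    and "bounded (f ` {t0..})" "bounded (f' ` {t0..})"
  shows "bounded_lipschitz_on {t0..} f"
proof -
  obtain C where "C > 0" "\<And>t. t \<ge> t0 \<Longrightarrow> \<bar>f' t\<bar> \<le> C"
    using assms(3) unfolding bounded_pos by auto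
  with assms(1,2) show ?thesis
    by (intro bounded_lipschitz_onI bounded_derivative_imp_lipschitz_atLeast) auto
qed

section \<open>Saturation\<close>

lemma sat_conv_max_min: "s > 0 \<Longrightarrow> sat s w = max (- s) (min s w)"
  unfolding sat_def by (cases "w > 0"; cases "w < 0") (auto simp: sgn_if min_def max_def)

lemma sat_minus: "sat s (- w) = - sat s w"
  by (simp add: sat_def)

lemma abs_sat_le: "s > 0 \<Longrightarrow> \<bar>sat s w\<bar> \<le> s"
  by (simp add: sat_conv_max_min)

lemma sat_eq_self: "s > 0 \<Longrightarrow> \<bar>w\<bar> \<le> s \<Longrightarrow> sat s w = w"
  by (simp add: sat_conv_max_min)

lemma sat_eq_level: "s > 0 \<Longrightarrow> s \<le> w \<Longrightarrow> sat s w = s"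
  by (simp add: sat_conv_max_min)

lemma sat_le_self: "s > 0 \<Longrightarrow> 0 \<le> sat s w \<Longrightarrow> sat s w \<le> w"
  by (simp add: sat_conv_max_min)

lemma sat_mono: "s > 0 \<Longrightarrow> a \<le> b \<Longrightarrow> sat s a \<le> sat s b"
  by (simp add: sat_conv_max_min)

lemma abs_sat_diff_le: "s > 0 \<Longrightarrow> \<bar>sat s a - sat s b\<bar> \<le> \<bar>a - b\<bar>"
  by (simp add: sat_conv_max_min max_def min_def)

lemma lipschitz_on_sat: "s > 0 \<Longrightarrow> 1-lipschitz_on U (sat s)"
  by (rule lipschitz_onI) (simp_all add: dist_real_def abs_sat_diff_le)

lemma sat_diff_mult_nonneg: "s > 0 \<Longrightarrow> 0 \<le> (a - b) * (sat s a - sat s b)"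
  by (cases "a \<le> b") (auto simp: mult_nonpos_nonpos dest: sat_mono[of s a b] sat_mono[of s b a])

lemma sat_diff_square_le: "s > 0 \<Longrightarrow> (sat s a - sat s b)\<^sup>2 \<le> (a - b) * (sat s a - sat s b)"
proof -
  assume "s > 0"
  have "(sat s a - sat s b)\<^sup>2 = \<bar>sat s a - sat s b\<bar> * \<bar>sat s a - sat s b\<bar>"
    by (simp add: power2_eq_square)
  also have "\<dots> \<le> \<bar>a - b\<bar> * \<bar>sat s a - sat s b\<bar>"
    using abs_sat_diff_le[OF \<open>s > 0\<close>] by (rule mult_right_mono) simp
  also have "\<dots> = (a - b) * (sat s a - sat s b)"
    using sat_diff_mult_nonneg[OF \<open>s > 0\<close>, of a b] by (simp add: abs_mult[symmetric])
  finally show ?thesis .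
qed

lemma sat_eq_if_close:
  assumes "s > 0" and close: "\<bar>w - m\<bar> < \<bar>m\<bar> - s"
  shows "sat s w = sat s m"
proof (cases "m \<ge> 0")
  case True
  with close have "s \<le> w" "s \<le> m"
    by (auto simp: abs_if split: if_splits)
  then show ?thesis
    by (simp add: sat_eq_level[OF \<open>s > 0\<close>])
next
  case False
  with close have "s \<le> - w" "s \<le> - m"
    by (auto simp: abs_if split: if_splits)
  then have "sat s (- w) = sat s (- m)"
    by (simp add: sat_eq_level[OF \<open>s > 0\<close>])
  then show ?thesis
    by (simp add: sat_minus)
qed

lemma spread_le_if_saturated_above:
  fixes w :: "'n::finite \<Rightarrow> real"
  assumes "s > 0" and sum_le: "(\<Sum>i\<in>UNIV. w i) \<le> real CARD('n) * s" and "e \<le> s"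
    and close: "\<And>i j. \<bar>sat s (w i) - sat s (w j)\<bar> \<le> e" and "s \<le> w k"
  shows "\<bar>w i - w j\<bar> \<le> real CARD('n) * e"
proof -
  have lower: "s - e \<le> w l" for l
  proof -
    have "s - e \<le> sat s (w l)"
      using close[of k l] sat_eq_level[OF \<open>s > 0\<close> \<open>s \<le> w k\<close>] by simp
    moreover have "sat s (w l) \<le> w l"
      using calculation \<open>e \<le> s\<close> by (intro sat_le_self[OF \<open>s > 0\<close>]) simp
    ultimately show ?thesis by simp
  qed
  have upper: "w l - (s - e) \<le> real CARD('n) * e" for l
  proof -
    have "w l - (s - e) \<le> (\<Sum>m\<in>UNIV. w m - (s - e))"
      using lower by (intro member_le_sum) auto
    also have "\<dots> = (\<Sum>m\<in>UNIV. w m) - real CARD('n) * (s - e)"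
      by (simp add: sum_subtractf)
    also have "\<dots> \<le> real CARD('n) * e"
      using sum_le by (simp add: algebra_simps)
    finally show ?thesis .
  qed
  show ?thesis
    using lower[of i] lower[of j] upper[of i] upper[of j] by linarith
qed

text \<open>This is where \<open>|m| \<le> s\<close> enters: agreement of the saturated velocities is inherited by
  the velocities themselves.\<close>

lemma spread_le_if_saturations_close:
  fixes w :: "'n::finite \<Rightarrow> real"
  assumes "s > 0" and mean: "\<bar>\<Sum>i\<in>UNIV. w i\<bar> \<le> real CARD('n) * s" and "e \<le> s"
    and close: "\<And>i j. \<bar>sat s (w i) - sat s (w j)\<bar> \<le> e"
  shows "\<bar>w i - w j\<bar> \<le> real CARD('n) * e"
proof -
  have "(\<exists>k. s \<le> w k) \<or> (\<exists>k. w k \<le> - s) \<or> (\<forall>k. \<bar>w k\<bar> \<le> s)"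
    by (meson abs_le_iff le_cases le_minus_iff order_trans)
  then consider (above) k where "s \<le> w k" | (below) k where "w k \<le> - s" | (inside) "\<And>k. \<bar>w k\<bar> \<le> s"
    by blast
  then show ?thesis
  proof cases
    case above
    have "(\<Sum>i\<in>UNIV. w i) \<le> real CARD('n) * s"
      using mean by (simp add: abs_le_iff)
    from spread_le_if_saturated_above[OF \<open>s > 0\<close> this \<open>e \<le> s\<close> close above] show ?thesis .
  next
    case below
    have "(\<Sum>i\<in>UNIV. - w i) \<le> real CARD('n) * s"
      using mean by (simp add: abs_le_iff sum_negf)
    moreover have "\<bar>sat s (- w i) - sat s (- w j)\<bar> \<le> e" for i j
      using close[of i j] by (simp add: sat_minus)
    moreover have "s \<le> - w k"
      using below by simp
    ultimately have "\<bar>- w i - - w j\<bar> \<le> real CARD('n) * e"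
      by (rule spread_le_if_saturated_above[OF \<open>s > 0\<close> _ \<open>e \<le> s\<close>])
    then show ?thesis by simp
  next
    case inside
    then have "\<bar>w i - w j\<bar> \<le> e"
      using close[of i j] by (simp add: sat_eq_self[OF \<open>s > 0\<close>])
    also have "e \<le> real CARD('n) * e"
      using close[of i i] mult_right_mono[of 1 "real CARD('n)" e] by (simp add: Suc_le_eq)
    finally show ?thesis .
  qed
qed

section \<open>Weighted graphs\<close>

lemma graph_connected_pairwise:
  assumes "graph_connected \<alpha>"
    and refl: "\<And>i. P i i" and trans: "\<And>i j k. P i j \<Longrightarrow> P j k \<Longrightarrow> P i k"
    and edge: "\<And>i j. \<alpha> i j > 0 \<Longrightarrow> P i j"
  shows "P i j"
proof -
  have "(\<lambda>a b. \<alpha> a b > 0)\<^sup>*\<^sup>* i j"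
    using assms(1) unfolding graph_connected_def by blast
  then show ?thesis
    by (induction rule: rtranclp_induct) (use refl trans edge in blast)+
qed

lemma graph_connected_tendsto_diff:
  fixes f :: "'n \<Rightarrow> 'a \<Rightarrow> real"
  assumes "graph_connected \<alpha>" and "\<And>i j. \<alpha> i j > 0 \<Longrightarrow> ((\<lambda>t. f i t - f j t) \<longlongrightarrow> 0) F"
  shows "((\<lambda>t. f i t - f j t) \<longlongrightarrow> 0) F"
  using assms(1)
proof (rule graph_connected_pairwise)
  fix i j k
  assume "((\<lambda>t. f i t - f j t) \<longlongrightarrow> 0) F" "((\<lambda>t. f j t - f k t) \<longlongrightarrow> 0) F"
  from tendsto_add[OF this] show "((\<lambda>t. f i t - f k t) \<longlongrightarrow> 0) F"
    by simp
qed (use assms(2) in auto)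

lemma laplacian_form_eq:
  fixes a :: "'n::finite \<Rightarrow> 'n \<Rightarrow> real"
  assumes sym: "\<And>i j. a i j = a j i"
  shows "(\<Sum>i\<in>UNIV. p i * (\<Sum>j\<in>UNIV. a i j * (d j - d i)))
       = - (\<Sum>i\<in>UNIV. \<Sum>j\<in>UNIV. a i j * ((p i - p j) * (d i - d j))) / 2"
proof -
  define A where "A = (\<Sum>i\<in>UNIV. p i * (\<Sum>j\<in>UNIV. a i j * (d j - d i)))"
  have A1: "A = (\<Sum>i\<in>UNIV. \<Sum>j\<in>UNIV. a i j * p i * (d j - d i))"
    unfolding A_def sum_distrib_left by (intro sum.cong refl) (simp add: algebra_simps)
  also have "\<dots> = (\<Sum>j\<in>UNIV. \<Sum>i\<in>UNIV. a i j * p i * (d j - d i))"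
    by (rule sum.swap)
  also have "\<dots> = (\<Sum>i\<in>UNIV. \<Sum>j\<in>UNIV. a i j * p j * (d i - d j))"
    using sym by simp
  finally have A2: "A = \<dots>" .
  have "2 * A = (\<Sum>i\<in>UNIV. \<Sum>j\<in>UNIV. a i j * p i * (d j - d i))
      + (\<Sum>i\<in>UNIV. \<Sum>j\<in>UNIV. a i j * p j * (d i - d j))"
    by (metis A1 A2 mult_2)
  also have "\<dots> = (\<Sum>i\<in>UNIV. \<Sum>j\<in>UNIV. a i j * p i * (d j - d i) + a i j * p j * (d i - d j))"
    by (simp add: sum.distrib)
  also have "\<dots> = (\<Sum>i\<in>UNIV. \<Sum>j\<in>UNIV. - (a i j * ((p i - p j) * (d i - d j))))"
    by (intro sum.cong refl) (simp add: algebra_simps)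
  finally show ?thesis
    unfolding A_def by (simp add: sum_negf)
qed

section \<open>The closed-loop system\<close>

locale saturated_consensus =
  fixes \<alpha> :: "'n::finite \<Rightarrow> 'n \<Rightarrow> real"
    and s t0 :: real
    and x v :: "'n \<Rightarrow> real \<Rightarrow> real"
  assumes sym: "\<And>i j. \<alpha> i j = \<alpha> j i"
    and nonneg: "\<And>i j. \<alpha> i j \<ge> 0"
    and conn: "graph_connected \<alpha>"
    and s_pos: "s > 0"
    and dx: "\<And>i t. t \<ge> t0 \<Longrightarrow> (x i has_real_derivative v i t) (at t within {t0..})"
    and dv: "\<And>i t. t \<ge> t0 \<Longrightarrow>
       (v i has_real_derivative
          (\<Sum>j\<in>UNIV. \<alpha> i j * ((x j t - x i t) + (sat s (v j t) - sat s (v i t)))))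
        (at t within {t0..})"
begin

definition y :: "'n \<Rightarrow> real \<Rightarrow> real" where
  "y i t = sat s (v i t)"

definition u :: "'n \<Rightarrow> real \<Rightarrow> real" where
  "u i t = (\<Sum>j\<in>UNIV. \<alpha> i j * ((x j t - x i t) + (y j t - y i t)))"

definition mean :: real where
  "mean = (\<Sum>i\<in>UNIV. v i t0) / real CARD('n)"

definition potential :: "real \<Rightarrow> real" where
  "potential t = (\<Sum>i\<in>UNIV. \<Sum>j\<in>UNIV. \<alpha> i j * (x i t - x j t)\<^sup>2)"

text \<open>Centred at the conserved mean velocity, so that it vanishes exactly at consensus.\<close>

definition energy :: "real \<Rightarrow> real" where
  "energy t = (\<Sum>i\<in>UNIV. (v i t - mean)\<^sup>2) / 2 + potential t / 4"

definition dissipation :: "real \<Rightarrow> real" where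
  "dissipation t = (\<Sum>i\<in>UNIV. \<Sum>j\<in>UNIV. \<alpha> i j * ((v i t - v j t) * (y i t - y j t))) / 2"

lemma has_derivative_v: "t \<ge> t0 \<Longrightarrow> (v i has_real_derivative u i t) (at t within {t0..})"
  using dv unfolding u_def y_def .

lemma sum_u_eq_0: "(\<Sum>i\<in>UNIV. u i t) = 0"
  using laplacian_form_eq[where a = \<alpha>, OF sym, where p = "\<lambda>_. 1" and d = "\<lambda>i. x i t + y i t"]
  unfolding u_def by (simp add: algebra_simps)

lemma sum_v_eq: "t \<ge> t0 \<Longrightarrow> (\<Sum>i\<in>UNIV. v i t) = real CARD('n) * mean"
proof -
  assume "t \<ge> t0"
  have "((\<lambda>t. \<Sum>i\<in>UNIV. v i t) has_real_derivative 0) (at t within {t0..})" if "t \<in> {t0..}" for t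
  proof -
    have "((\<lambda>t. \<Sum>i\<in>UNIV. v i t) has_real_derivative (\<Sum>i\<in>UNIV. u i t)) (at t within {t0..})"
      using that by (intro DERIV_sum has_derivative_v) simp
    then show ?thesis by (simp add: sum_u_eq_0)
  qed
  then obtain c where "\<And>t. t \<in> {t0..} \<Longrightarrow> (\<Sum>i\<in>UNIV. v i t) = c"
    using has_field_derivative_zero_constant[of "{t0..}"] by (metis convex_real_interval(1))
  with \<open>t \<ge> t0\<close> show ?thesis
    unfolding mean_def by simp
qed

lemma dissipation_nonneg: "dissipation t \<ge> 0"
  unfolding dissipation_def y_def
  by (intro divide_nonneg_pos sum_nonneg mult_nonneg_nonneg nonneg sat_diff_mult_nonneg s_pos) simp

lemma potential_nonneg: "potential t \<ge> 0"
  unfolding potential_def by (intro sum_nonneg mult_nonneg_nonneg nonneg) simp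

lemma energy_nonneg: "energy t \<ge> 0"
  unfolding energy_def using potential_nonneg[of t] by (simp add: sum_nonneg)

lemma velocity_work_eq:
  "(\<Sum>i\<in>UNIV. (v i t - mean) * u i t) =
    - (\<Sum>i\<in>UNIV. \<Sum>j\<in>UNIV. \<alpha> i j * ((v i t - v j t) * (x i t - x j t))) / 2 - dissipation t"
proof -
  have "u i t = (\<Sum>j\<in>UNIV. \<alpha> i j * (x j t - x i t)) + (\<Sum>j\<in>UNIV. \<alpha> i j * (y j t - y i t))" for i
    unfolding u_def by (simp add: distrib_left sum.distrib)
  then have "(\<Sum>i\<in>UNIV. v i t * u i t) =
      - (\<Sum>i\<in>UNIV. \<Sum>j\<in>UNIV. \<alpha> i j * ((v i t - v j t) * (x i t - x j t))) / 2 - dissipation t"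
    unfolding dissipation_def by (simp add: distrib_left sum.distrib laplacian_form_eq[where a = \<alpha>, OF sym])
  moreover have "(\<Sum>i\<in>UNIV. (v i t - mean) * u i t) = (\<Sum>i\<in>UNIV. v i t * u i t)"
    using sum_u_eq_0[of t] by (simp add: left_diff_distrib sum_subtractf sum_distrib_left[symmetric])
  ultimately show ?thesis
    by simp
qed

lemma has_derivative_energy:
  assumes "t \<ge> t0"
  shows "(energy has_real_derivative - dissipation t) (at t within {t0..})"
proof -
  define X where "X = (\<Sum>i\<in>UNIV. \<Sum>j\<in>UNIV. \<alpha> i j * ((v i t - v j t) * (x i t - x j t)))"
  have "((\<lambda>t. \<Sum>i\<in>UNIV. (v i t - mean)\<^sup>2) has_real_derivative
      2 * (\<Sum>i\<in>UNIV. (v i t - mean) * u i t)) (at t within {t0..})"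
    using assms by (auto intro!: derivative_eq_intros has_derivative_v sum.cong
        simp: sum_distrib_left algebra_simps)
  moreover have "(potential has_real_derivative 2 * X) (at t within {t0..})"
    unfolding potential_def[abs_def] X_def using assms
    by (auto intro!: derivative_eq_intros dx sum.cong simp: sum_distrib_left algebra_simps)
  ultimately have "(energy has_real_derivative
      2 * (\<Sum>i\<in>UNIV. (v i t - mean) * u i t) / 2 + 2 * X / 4) (at t within {t0..})"
    unfolding energy_def[abs_def] by (intro DERIV_add DERIV_cdivide)
  moreover have "2 * (\<Sum>i\<in>UNIV. (v i t - mean) * u i t) / 2 + 2 * X / 4 = - dissipation t"
    unfolding velocity_work_eq X_def[symmetric] by (simp add: field_simps)
  ultimately show ?thesis
    by simp
qed

lemma energy_antimono: "t0 \<le> a \<Longrightarrow> a \<le> b \<Longrightarrow> energy b \<le> energy a"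
  using deriv_nonneg_imp_mono_atLeast[of t0 "\<lambda>t. - energy t" dissipation a b]
    DERIV_minus[OF has_derivative_energy] dissipation_nonneg by simp

lemma potential_edge_le: "\<alpha> i j * (x i t - x j t)\<^sup>2 \<le> potential t"
proof -
  have "\<alpha> i j * (x i t - x j t)\<^sup>2 \<le> (\<Sum>j\<in>UNIV. \<alpha> i j * (x i t - x j t)\<^sup>2)"
    by (rule member_le_sum) (auto intro: mult_nonneg_nonneg nonneg)
  also have "\<dots> \<le> potential t"
    unfolding potential_def by (rule member_le_sum) (auto intro!: sum_nonneg mult_nonneg_nonneg nonneg)
  finally show ?thesis .
qed

lemma potential_le_energy: "potential t \<le> 4 * energy t"
  unfolding energy_def by (simp add: sum_nonneg)

lemma velocity_deviation_le_energy: "(v i t - mean)\<^sup>2 \<le> 2 * energy t"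
proof -
  have "(v i t - mean)\<^sup>2 \<le> (\<Sum>i\<in>UNIV. (v i t - mean)\<^sup>2)"
    by (rule member_le_sum) auto
  then show ?thesis
    unfolding energy_def using potential_nonneg[of t] by simp
qed

lemma bounded_velocity: "bounded (v i ` {t0..})"
proof -
  have "\<bar>v i t - mean\<bar> \<le> sqrt (2 * energy t0)" if "t \<ge> t0" for t
    using velocity_deviation_le_energy[of i t] energy_antimono[OF order_refl that]
    by (intro real_le_rsqrt) simp
  then have "\<bar>v i t\<bar> \<le> \<bar>mean\<bar> + sqrt (2 * energy t0)" if "t \<ge> t0" for t
    using that by fastforce
  then show ?thesis
    unfolding bounded_real by auto
qed

lemma bounded_position_diff: "bounded ((\<lambda>t. x i t - x j t) ` {t0..})"
  using conn
proof (rule graph_connected_pairwise)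
  fix i j k
  assume "bounded ((\<lambda>t. x i t - x j t) ` {t0..})" "bounded ((\<lambda>t. x j t - x k t) ` {t0..})"
  from bounded_plus_comp[OF this] show "bounded ((\<lambda>t. x i t - x k t) ` {t0..})"
    by simp
next
  fix i j assume "\<alpha> i j > 0"
  have "\<bar>x i t - x j t\<bar> \<le> sqrt (4 * energy t0 / \<alpha> i j)" if "t \<ge> t0" for t
  proof (rule real_le_rsqrt)
    have "\<alpha> i j * (x i t - x j t)\<^sup>2 \<le> 4 * energy t0"
      using potential_edge_le[of i j t] potential_le_energy[of t] energy_antimono[OF order_refl that]
      by linarith
    with \<open>\<alpha> i j > 0\<close> show "\<bar>x i t - x j t\<bar>\<^sup>2 \<le> 4 * energy t0 / \<alpha> i j"
      by (simp add: pos_le_divide_eq mult.commute)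
  qed
  then show "bounded ((\<lambda>t. x i t - x j t) ` {t0..})"
    unfolding bounded_real by auto
qed (auto simp: bounded_real)

lemma bounded_sat_velocity: "bounded (y i ` {t0..})"
  unfolding bounded_real y_def using abs_sat_le[OF s_pos] by blast

lemma bounded_u: "bounded (u i ` {t0..})"
  unfolding u_def[abs_def]
  by (intro bounded_sum_comp bounded_mult_comp bounded_plus_comp bounded_minus_comp
      bounded_position_diff bounded_sat_velocity) (auto simp: bounded_real)

lemma bounded_lipschitz_velocity: "bounded_lipschitz_on {t0..} (v i)"
  by (rule bounded_derivative_imp_bounded_lipschitz_on[OF has_derivative_v bounded_velocity bounded_u])

lemma bounded_lipschitz_position_diff: "bounded_lipschitz_on {t0..} (\<lambda>t. x i t - x j t)"
  by (rule bounded_derivative_imp_bounded_lipschitz_on[OF DERIV_diff[OF dx dx] bounded_position_diff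
        bounded_minus_comp[OF bounded_velocity bounded_velocity]])

lemma bounded_lipschitz_sat_velocity: "bounded_lipschitz_on {t0..} (y i)"
  unfolding y_def[abs_def]
  by (rule bounded_lipschitz_on_compose[OF lipschitz_on_sat[OF s_pos] bounded_lipschitz_velocity])

lemma bounded_lipschitz_u: "bounded_lipschitz_on {t0..} (u i)"
  unfolding u_def[abs_def]
  by (intro bounded_lipschitz_on_sum bounded_lipschitz_on_mult bounded_lipschitz_on_const
      bounded_lipschitz_on_add bounded_lipschitz_position_diff bounded_lipschitz_on_diff
      bounded_lipschitz_sat_velocity)

lemma bounded_lipschitz_dissipation: "bounded_lipschitz_on {t0..} dissipation"
proof -
  have "bounded_lipschitz_on {t0..}
      (\<lambda>t. (\<Sum>i\<in>UNIV. \<Sum>j\<in>UNIV. \<alpha> i j * ((v i t - v j t) * (y i t - y j t))) * (1 / 2))"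
    by (intro bounded_lipschitz_on_mult bounded_lipschitz_on_sum bounded_lipschitz_on_const
        bounded_lipschitz_on_diff bounded_lipschitz_velocity bounded_lipschitz_sat_velocity)
  then show ?thesis
    unfolding dissipation_def[abs_def] by simp
qed

lemma dissipation_tendsto_0: "(dissipation \<longlongrightarrow> 0) at_top"
proof (rule barbalat)
  show "((\<lambda>t. - energy t) has_real_derivative dissipation t) (at t within {t0..})" if "t \<ge> t0" for t
    using DERIV_minus[OF has_derivative_energy[OF that]] by simp
  show "((\<lambda>t. - energy t) \<longlongrightarrow> - Inf (energy ` {t0..})) at_top"
    by (intro tendsto_minus tendsto_Inf_if_antimono_atLeast[where B = 0] energy_antimono energy_nonneg)
  show "uniformly_continuous_on {t0..} dissipation"
    by (rule bounded_lipschitz_on_imp_uniformly_continuous_on[OF bounded_lipschitz_dissipation])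
qed

lemma sat_velocity_diff_tendsto_0: "((\<lambda>t. y i t - y j t) \<longlongrightarrow> 0) at_top"
  using conn
proof (rule graph_connected_tendsto_diff)
  fix i j assume "\<alpha> i j > 0"
  have terms_nonneg: "0 \<le> \<alpha> k l * ((v k t - v l t) * (y k t - y l t))" for k l t
    unfolding y_def by (intro mult_nonneg_nonneg nonneg sat_diff_mult_nonneg s_pos)
  have bound: "\<alpha> i j * (y i t - y j t)\<^sup>2 \<le> 2 * dissipation t" for t
  proof -
    have "\<alpha> i j * (y i t - y j t)\<^sup>2 \<le> \<alpha> i j * ((v i t - v j t) * (y i t - y j t))"
      unfolding y_def by (intro mult_left_mono nonneg sat_diff_square_le s_pos)
    also have "\<dots> \<le> (\<Sum>l\<in>UNIV. \<alpha> i l * ((v i t - v l t) * (y i t - y l t)))"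
      by (rule member_le_sum) (simp_all add: terms_nonneg)
    also have "\<dots> \<le> (\<Sum>k\<in>UNIV. \<Sum>l\<in>UNIV. \<alpha> k l * ((v k t - v l t) * (y k t - y l t)))"
      by (rule member_le_sum) (simp_all add: terms_nonneg sum_nonneg)
    also have "\<dots> = 2 * dissipation t"
      unfolding dissipation_def by simp
    finally show ?thesis .
  qed
  show "((\<lambda>t. y i t - y j t) \<longlongrightarrow> 0) at_top"
    using \<open>\<alpha> i j > 0\<close> always_eventually[OF allI[OF bound]]
      tendsto_mult_right_zero[OF dissipation_tendsto_0]
    by (rule tendsto_0_if_weighted_square_le)
qed

lemma velocity_consensus:
  assumes "\<bar>mean\<bar> \<le> s"
  shows "((\<lambda>t. v i t - v j t) \<longlongrightarrow> 0) at_top"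
proof (rule tendstoI)
  fix \<epsilon> :: real assume "\<epsilon> > 0"
  define N where "N = real CARD('n)"
  have "N > 0" unfolding N_def by simp
  define e where "e = min (\<epsilon> / (2 * N)) s"
  have "e > 0" "e \<le> s"
    using \<open>\<epsilon> > 0\<close> \<open>N > 0\<close> s_pos unfolding e_def by auto
  have "N * e \<le> N * (\<epsilon> / (2 * N))"
    unfolding e_def using \<open>N > 0\<close> by (intro mult_left_mono) auto
  also have "\<dots> < \<epsilon>"
    using \<open>N > 0\<close> \<open>\<epsilon> > 0\<close> by simp
  finally have "N * e < \<epsilon>" .
  have "eventually (\<lambda>t. \<forall>k l. \<bar>y k t - y l t\<bar> < e) at_top"
  proof (intro eventually_all_finite)
    fix k l
    show "eventually (\<lambda>t. \<bar>y k t - y l t\<bar> < e) at_top"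
      using tendstoD[OF sat_velocity_diff_tendsto_0 \<open>e > 0\<close>, of k l] by (simp add: dist_real_def)
  qed
  with eventually_ge_at_top[of t0] show "eventually (\<lambda>t. dist (v i t - v j t) 0 < \<epsilon>) at_top"
  proof eventually_elim
    case (elim t)
    have "\<bar>\<Sum>k\<in>UNIV. v k t\<bar> \<le> N * s"
      using sum_v_eq[OF elim(1)] assms \<open>N > 0\<close> unfolding N_def by (simp add: abs_mult)
    moreover have "\<bar>sat s (v k t) - sat s (v l t)\<bar> \<le> e" for k l
      using elim(2) unfolding y_def by (simp add: less_imp_le)
    ultimately have "\<bar>v i t - v j t\<bar> \<le> N * e"
      unfolding N_def by (rule spread_le_if_saturations_close[OF s_pos _ \<open>e \<le> s\<close>])
    with \<open>N * e < \<epsilon>\<close> show ?case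
      by simp
  qed
qed

lemma velocity_tendsto_mean:
  assumes "\<And>i j. ((\<lambda>t. v i t - v j t) \<longlongrightarrow> 0) at_top"
  shows "(v i \<longlongrightarrow> mean) at_top"
proof -
  have "((\<lambda>t. (\<Sum>j\<in>UNIV. v i t - v j t) / real CARD('n)) \<longlongrightarrow> 0) at_top"
    using tendsto_divide[OF tendsto_null_sum[OF assms] tendsto_const, of "real CARD('n)"] by simp
  moreover have "(\<Sum>j\<in>UNIV. v i t - v j t) / real CARD('n) = v i t - mean" if "t \<ge> t0" for t
  proof -
    have "(\<Sum>j\<in>UNIV. v i t - v j t) = real CARD('n) * (v i t - mean)"
      using sum_v_eq[OF that] by (simp add: sum_subtractf right_diff_distrib)
    then show ?thesis by simp
  qed
  then have "eventually (\<lambda>t. (\<Sum>j\<in>UNIV. v i t - v j t) / real CARD('n) = v i t - mean) at_top"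
    by (rule eventually_at_top_linorderI)
  ultimately have "((\<lambda>t. v i t - mean) \<longlongrightarrow> 0) at_top"
    by (rule Lim_transform_eventually)
  then show ?thesis
    by (rule LIM_zero_cancel)
qed

lemma u_tendsto_0:
  assumes "\<And>i j. ((\<lambda>t. v i t - v j t) \<longlongrightarrow> 0) at_top"
  shows "(u i \<longlongrightarrow> 0) at_top"
  by (rule barbalat[OF has_derivative_v velocity_tendsto_mean[OF assms]
        bounded_lipschitz_on_imp_uniformly_continuous_on[OF bounded_lipschitz_u]])

lemma laplacian_position_tendsto_0:
  assumes "\<And>i j. ((\<lambda>t. v i t - v j t) \<longlongrightarrow> 0) at_top"
  shows "((\<lambda>t. \<Sum>j\<in>UNIV. \<alpha> i j * (x j t - x i t)) \<longlongrightarrow> 0) at_top"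
proof -
  have "((\<lambda>t. u i t - (\<Sum>j\<in>UNIV. \<alpha> i j * (y j t - y i t))) \<longlongrightarrow> 0 - 0) at_top"
    by (intro tendsto_diff u_tendsto_0[OF assms] tendsto_null_sum tendsto_mult_right_zero
        sat_velocity_diff_tendsto_0)
  moreover have "u i t - (\<Sum>j\<in>UNIV. \<alpha> i j * (y j t - y i t)) = (\<Sum>j\<in>UNIV. \<alpha> i j * (x j t - x i t))" for t
    unfolding u_def by (simp add: distrib_left sum.distrib)
  ultimately show ?thesis
    by simp
qed

lemma potential_tendsto_0:
  assumes "\<And>i j. ((\<lambda>t. v i t - v j t) \<longlongrightarrow> 0) at_top"
  shows "(potential \<longlongrightarrow> 0) at_top"
proof -
  fix k :: 'n
  \<comment> \<open>Summing by parts against \<open>x - x\<^sub>k\<close> turns the potential into bounded factors times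
    Laplacian terms.\<close>
  have "potential t = - 2 * (\<Sum>i\<in>UNIV. (x i t - x k t) * (\<Sum>j\<in>UNIV. \<alpha> i j * (x j t - x i t)))" for t
    using laplacian_form_eq[where a = \<alpha> and p = "\<lambda>i. x i t - x k t" and d = "\<lambda>i. x i t - x k t", OF sym]
    unfolding potential_def by (simp add: power2_eq_square)
  then have "potential = (\<lambda>t. - 2 * (\<Sum>i\<in>UNIV. (x i t - x k t) * (\<Sum>j\<in>UNIV. \<alpha> i j * (x j t - x i t))))"
    by (rule ext)
  moreover have "((\<lambda>t. - 2 * (\<Sum>i\<in>UNIV. (x i t - x k t) * (\<Sum>j\<in>UNIV. \<alpha> i j * (x j t - x i t))))
      \<longlongrightarrow> 0) at_top"
    by (intro tendsto_mult_right_zero tendsto_null_sum tendsto_0_if_bounded_mult[OF bounded_position_diff]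
        laplacian_position_tendsto_0 assms)
  ultimately show ?thesis
    by simp
qed

lemma position_consensus:
  assumes "\<And>i j. ((\<lambda>t. v i t - v j t) \<longlongrightarrow> 0) at_top"
  shows "((\<lambda>t. x i t - x j t) \<longlongrightarrow> 0) at_top"
  using conn
proof (rule graph_connected_tendsto_diff)
  fix i j assume "\<alpha> i j > 0"
  then show "((\<lambda>t. x i t - x j t) \<longlongrightarrow> 0) at_top"
    using always_eventually[OF allI[OF potential_edge_le]] potential_tendsto_0[OF assms]
    by (rule tendsto_0_if_weighted_square_le)
qed

lemma energy_pos_if_not_consensus:
  assumes "\<not> ((\<forall>i j. x i t = x j t) \<and> (\<forall>i j. v i t = v j t))"
  shows "energy t > 0"
proof (rule ccontr)
  assume "\<not> energy t > 0"
  then have "(\<Sum>i\<in>UNIV. (v i t - mean)\<^sup>2) = 0" and "potential t = 0"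
    using energy_nonneg[of t] potential_nonneg[of t] sum_nonneg[of UNIV "\<lambda>i. (v i t - mean)\<^sup>2"]
    unfolding energy_def by auto
  then have "v i t = mean" for i
    by (simp add: sum_nonneg_eq_0_iff)
  moreover have "x i t = x j t" for i j
    using conn
  proof (rule graph_connected_pairwise)
    fix i j assume "\<alpha> i j > 0"
    then have "(x i t - x j t)\<^sup>2 \<le> 0"
      using potential_edge_le[of i j t] \<open>potential t = 0\<close> by (simp add: mult_le_0_iff)
    then show "x i t = x j t"
      by simp
  qed simp_all
  ultimately show False
    using assms by simp
qed

text \<open>A bound on the decay rate of the energy, which therefore never reaches 0 in finite time.\<close>

lemma dissipation_le_energy:
  "dissipation t \<le> 4 * (\<Sum>i\<in>UNIV. \<Sum>j\<in>UNIV. \<alpha> i j) * energy t"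
proof -
  have "\<alpha> i j * ((v i t - v j t) * (y i t - y j t)) \<le> \<alpha> i j * (8 * energy t)" for i j
  proof (rule mult_left_mono[OF _ nonneg])
    have "(v i t - v j t) * (y i t - y j t) \<le> \<bar>v i t - v j t\<bar> * \<bar>y i t - y j t\<bar>"
      by (simp add: abs_mult[symmetric])
    also have "\<dots> \<le> \<bar>v i t - v j t\<bar> * \<bar>v i t - v j t\<bar>"
      unfolding y_def by (intro mult_left_mono abs_sat_diff_le s_pos) simp
    also have "\<dots> = ((v i t - mean) - (v j t - mean))\<^sup>2"
      by (simp add: power2_eq_square)
    also have "\<dots> \<le> 2 * (v i t - mean)\<^sup>2 + 2 * (v j t - mean)\<^sup>2"
      using zero_le_power2[of "(v i t - mean) + (v j t - mean)"]
      unfolding power2_eq_square by (simp add: algebra_simps)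
    also have "\<dots> \<le> 8 * energy t"
      using velocity_deviation_le_energy[of i t] velocity_deviation_le_energy[of j t] by simp
    finally show "(v i t - v j t) * (y i t - y j t) \<le> 8 * energy t" .
  qed
  then have "2 * dissipation t \<le> (\<Sum>i\<in>UNIV. \<Sum>j\<in>UNIV. \<alpha> i j * (8 * energy t))"
    unfolding dissipation_def by (simp add: sum_mono)
  then show ?thesis
    by (simp add: sum_distrib_right[symmetric] algebra_simps)
qed

lemma energy_pos:
  assumes "energy t0 > 0" "t \<ge> t0"
  shows "energy t > 0"
  using has_derivative_energy _ assms
proof (rule pos_if_derivative_ge_linear)
  show "- (4 * (\<Sum>i\<in>UNIV. \<Sum>j\<in>UNIV. \<alpha> i j)) * energy t \<le> - dissipation t" for t
    using dissipation_le_energy[of t] by simp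
qed

lemma dissipation_eventually_0:
  assumes "\<bar>mean\<bar> > s" and "\<And>i j. ((\<lambda>t. v i t - v j t) \<longlongrightarrow> 0) at_top"
  shows "eventually (\<lambda>t. dissipation t = 0) at_top"
proof -
  have "eventually (\<lambda>t. \<forall>i. \<bar>v i t - mean\<bar> < \<bar>mean\<bar> - s) at_top"
  proof (intro eventually_all_finite)
    fix i
    show "eventually (\<lambda>t. \<bar>v i t - mean\<bar> < \<bar>mean\<bar> - s) at_top"
      using tendstoD[OF velocity_tendsto_mean[OF assms(2)], of "\<bar>mean\<bar> - s"] assms(1)
      by (simp add: dist_real_def)
  qed
  then show ?thesis
  proof eventually_elim
    case (elim t)
    then have "y i t = sat s mean" for i
      unfolding y_def by (intro sat_eq_if_close s_pos) simp
    then show ?case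
      unfolding dissipation_def by simp
  qed
qed

lemma energy_tendsto_0:
  assumes "\<And>i j. ((\<lambda>t. v i t - v j t) \<longlongrightarrow> 0) at_top"
    and "\<And>i j. ((\<lambda>t. x i t - x j t) \<longlongrightarrow> 0) at_top"
  shows "(energy \<longlongrightarrow> 0) at_top"
proof -
  have "((\<lambda>t. (v i t - mean)\<^sup>2) \<longlongrightarrow> 0) at_top" for i
    using tendsto_power[OF LIM_zero[OF velocity_tendsto_mean[OF assms(1), of i]], of 2] by simp
  moreover have "((\<lambda>t. \<alpha> i j * (x i t - x j t)\<^sup>2) \<longlongrightarrow> 0) at_top" for i j
    using tendsto_mult[OF tendsto_const tendsto_power[OF assms(2)[of i j], of 2], of "\<alpha> i j"] by simp
  ultimately have "((\<lambda>t. (\<Sum>i\<in>UNIV. (v i t - mean)\<^sup>2) / 2 + potential t / 4) \<longlongrightarrow> 0 / 2 + 0 / 4) at_top"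
    unfolding potential_def by (intro tendsto_add tendsto_divide tendsto_null_sum tendsto_const) auto
  then show ?thesis
    unfolding energy_def[abs_def] by simp
qed

lemma mean_le_level_if_consensus:
  assumes "\<not> ((\<forall>i j. x i t0 = x j t0) \<and> (\<forall>i j. v i t0 = v j t0))"
    and "\<And>i j. ((\<lambda>t. v i t - v j t) \<longlongrightarrow> 0) at_top"
    and "\<And>i j. ((\<lambda>t. x i t - x j t) \<longlongrightarrow> 0) at_top"
  shows "\<bar>mean\<bar> \<le> s"
proof (rule ccontr)
  assume "\<not> \<bar>mean\<bar> \<le> s"
  then have "eventually (\<lambda>t. - dissipation t = 0) at_top"
    using dissipation_eventually_0[OF _ assms(2)] by simp
  then have "eventually (\<lambda>t. energy t = 0) at_top"
    using eventually_eq_lim_if_derivative_eventually_0[of t0 energy "\<lambda>t. - dissipation t",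
        OF has_derivative_energy _ energy_tendsto_0[OF assms(2,3)]] by simp
  moreover have "eventually (\<lambda>t. energy t > 0) at_top"
    using energy_pos[OF energy_pos_if_not_consensus[OF assms(1)]]
    by (rule eventually_at_top_linorderI)
  ultimately have "eventually (\<lambda>t. energy t = 0 \<and> energy t > 0) at_top"
    by (rule eventually_conj)
  then show False
    by (auto simp: eventually_at_top_linorder)
qed

end

theorem theorem4:
  fixes \<alpha> :: "'n::finite \<Rightarrow> 'n \<Rightarrow> real"
    and s t0 :: real
    and x v :: "'n \<Rightarrow> real \<Rightarrow> real"
  assumes sym: "\<And>i j. \<alpha> i j = \<alpha> j i"
    and nonneg: "\<And>i j. \<alpha> i j \<ge> 0"
    and conn: "graph_connected \<alpha>"
    and s_pos: "s > 0"
    and dx: "\<And>i t. t \<ge> t0 \<Longrightarrow> (x i has_real_derivative v i t) (at t within {t0..})"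
    and dv: "\<And>i t. t \<ge> t0 \<Longrightarrow>
       (v i has_real_derivative
          (\<Sum>j\<in>UNIV. \<alpha> i j * ((x j t - x i t) + (sat s (v j t) - sat s (v i t)))))
        (at t within {t0..})"
    and not_cons: "\<not> ((\<forall>i j. x i t0 = x j t0) \<and> (\<forall>i j. v i t0 = v j t0))"
  shows "(\<forall>i j. ((\<lambda>t. x i t - x j t) \<longlongrightarrow> 0) at_top \<and>
                ((\<lambda>t. v i t - v j t) \<longlongrightarrow> 0) at_top)
         \<longleftrightarrow> \<bar>\<Sum>i\<in>UNIV. v i t0\<bar> / real CARD('n) \<le> s"
proof -
  interpret saturated_consensus \<alpha> s t0 x v
    using sym nonneg conn s_pos dx dv by unfold_locales
  have "\<bar>\<Sum>i\<in>UNIV. v i t0\<bar> / real CARD('n) = \<bar>mean\<bar>"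
    unfolding mean_def by simp
  then show ?thesis
    using velocity_consensus position_consensus mean_le_level_if_consensus[OF not_cons] by metis
qed

end
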